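(* Let $f:\mathcal X\to\mathbb{R}$ have $\ell_2$-sensitivity $\Delta_2$, and let $\mathcal G_\rho(x)=f(x)+\mathcal N(0,\tfrac{\Delta_2^2}{2\rho})$ be the Gaussian mechanism. Consider the following stateful procedure on input $x\in\mathcal X$: initialize $M=\{(0,\infty),(\infty,f(x))\}$; on receiving a parameter $\rho>0$: find $(\rho_k,Y_{\rho_k}),(\rho_{k+1},Y_{\rho_{k+1}})\in M$ with $\rho\in[\rho_k,\rho_{k+1})$ and no $(\rho',\cdot)\in M$ with $\rho'\in(\rho_k,\rho_{k+1})$; sample fresh independent $Z_\rho\sim\mathcal N\!\left(0,\Delta_2^2\tfrac{(1-\rho_k/\rho)(1/\rho-1/\rho_{k+1})}{2(1-\rho_k/\rho_{k+1})}\right)$; set $$Y_\rho=Z_\rho+\frac{(1-\rho_k/\rho)Y_{\rho_{k+1}}+(\rho_k/\rho-\rho_k/\rho_{k+1})Y_{\rho_k}}{1-\rho_k/\rho_{k+1}},$$ add $(\rho,Y_\rho)$ to $M$ and output $Y_\rho$ (conventions: if $\rho_{k+1}=\infty$ then $\rho_k/\rho_{k+1}=1/\rho_{k+1}=0$; if $\rho_k=0$ the term involving $Y_{\rho_k}$ is omitted). Then this procedure implements $(\mathcal G_\rho)_{\rho>0}$ with lossless multiple release.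
   Context: Lossless multiple release: let $(\mathcal M_\rho)_{\rho>0}$, $\mathcal M_\rho:\mathcal X\to\mathcal Y$, be a family of randomized mechanisms. An implementation is a randomized stateful procedure $\textsc M$ which, given $x\in\mathcal X$, receives privacy parameters $\rho\in\mathbb{R}_+$ one at a time in arbitrary order and outputs a value $\textsc M(x,\rho)\in\mathcal Y$ for each. $\textsc M$ implements $(\mathcal M_\rho)$ with lossless multiple release if for every $x\in\mathcal X$: (1) for every $\rho$, $\textsc M(x,\rho)$ has the same distribution as $\mathcal M_\rho(x)$; (2) for every finite $S\subset\mathbb{R}_+$ processed in arbitrary order and every $y\in\mathcal Y$, conditioned on $\textsc M(x,\max S)=y$, the joint distribution of $(\textsc M(x,\rho))_{\rho\in S}$ is uniquely determined by $y$ and $S$ (it does not depend on $x$). The $\ell_2$-sensitivity of $f$ is $\max\|f(x)-f(x')\|_2$ over neighboring datasets $x,x'$. *)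

theory Defs
  imports "HOL-Probability.Probability"
begin

definition gauss :: "real \<Rightarrow> real \<Rightarrow> real measure" where
  "gauss mu v = (if v \<le> 0 then return borel mu
                 else density lborel (normal_density mu (sqrt v)))"

definition has_l2_sensitivity :: "('x \<Rightarrow> 'x \<Rightarrow> bool) \<Rightarrow> ('x \<Rightarrow> real) \<Rightarrow> real \<Rightarrow> bool" where
  "has_l2_sensitivity nbr f D \<longleftrightarrow>
     (\<forall>x x'. nbr x x' \<longrightarrow> \<bar>f x - f x'\<bar> \<le> D) \<and> (\<exists>x x'. nbr x x' \<and> \<bar>f x - f x'\<bar> = D)"

definition gauss_mech :: "real \<Rightarrow> ('x \<Rightarrow> real) \<Rightarrow> real \<Rightarrow> 'x \<Rightarrow> real measure" where
  "gauss_mech D f rho x = gauss (f x) (D\<^sup>2 / (2 * rho))"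

text \<open>P is the (finite) set of already processed parameters,
  Y their released values, fx = f(x) (the value attached to rho = infinity), rho the new
  parameter.  lo / hi are rho_k / rho_(k+1); None encodes rho_k = 0 resp. rho_(k+1) = infinity.\<close>
definition step_law :: "real \<Rightarrow> real \<Rightarrow> real set \<Rightarrow> (real \<Rightarrow> real) \<Rightarrow> real \<Rightarrow> real measure" where
  "step_law D fx P Y rho =
     (let lo = (if \<exists>r\<in>P. r \<le> rho then Some (Max {r\<in>P. r \<le> rho}) else None);
          hi = (if \<exists>r\<in>P. rho < r then Some (Min {r\<in>P. rho < r}) else None);
          a  = (case lo of None \<Rightarrow> 0 | Some rk \<Rightarrow> rk / rho);
          b  = (case (lo, hi) of (Some rk, Some rk1) \<Rightarrow> rk / rk1 | _ \<Rightarrow> 0);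
          c  = (case hi of None \<Rightarrow> 0 | Some rk1 \<Rightarrow> 1 / rk1);
          Yhi = (case hi of None \<Rightarrow> fx | Some rk1 \<Rightarrow> Y rk1);
          lo_term = (case lo of None \<Rightarrow> 0 | Some rk \<Rightarrow> (a - b) * Y rk);
          mean = ((1 - a) * Yhi + lo_term) / (1 - b);
          var = D\<^sup>2 * ((1 - a) * (1 / rho - c)) / (2 * (1 - b))
      in gauss mean var)"

text \<open>Joint law of all outputs after processing the parameters in the given order
  (list given in reverse processing order); outputs indexed by the parameter.\<close>
primrec gauss_proc_rev :: "real \<Rightarrow> real \<Rightarrow> real list \<Rightarrow> (real \<Rightarrow> real) measure" where
  "gauss_proc_rev D fx [] = return (PiM {} (\<lambda>_. borel)) (\<lambda>_. undefined)"
| "gauss_proc_rev D fx (rho # rs) =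
     bind (gauss_proc_rev D fx rs)
       (\<lambda>Y. distr (step_law D fx (set rs) Y rho) (PiM (insert rho (set rs)) (\<lambda>_. borel))
                   (\<lambda>y. Y(rho := y)))"

definition gauss_proc :: "real \<Rightarrow> ('x \<Rightarrow> real) \<Rightarrow> 'x \<Rightarrow> real list \<Rightarrow> (real \<Rightarrow> real) measure" where
  "gauss_proc D f x rs = gauss_proc_rev D (f x) (rev rs)"

definition lossless_multiple_release ::
  "('x \<Rightarrow> real list \<Rightarrow> (real \<Rightarrow> real) measure) \<Rightarrow> (real \<Rightarrow> 'x \<Rightarrow> real measure) \<Rightarrow> bool" where
  "lossless_multiple_release proc mech \<longleftrightarrow>
     (\<forall>x rs rho. distinct rs \<and> (\<forall>r\<in>set rs. 0 < r) \<and> rho \<in> set rs \<longrightarrow>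
        distr (proc x rs) borel (\<lambda>Y. Y rho) = mech rho x) \<and>
     (\<exists>K :: real set \<Rightarrow> real \<Rightarrow> (real \<Rightarrow> real) measure.
        (\<forall>S. K S \<in> borel \<rightarrow>\<^sub>M prob_algebra (PiM S (\<lambda>_. borel))) \<and>
        (\<forall>x rs. distinct rs \<and> rs \<noteq> [] \<and> (\<forall>r\<in>set rs. 0 < r) \<longrightarrow>
           proc x rs = bind (distr (proc x rs) borel (\<lambda>Y. Y (Max (set rs)))) (K (set rs))))"

end

theory Submission
  imports Defs
begin

text \<open>On the time scale \<open>t = 1 / \<rho>\<close> the released values behave like \<open>f x + W t\<close> for a Brownian
  motion \<open>W\<close> of variance \<open>D\<^sup>2 / 2\<close> per unit time: each new parameter is sampled from the Brownian
  bridge between the values at the two neighbouring released times, \<open>\<rho> = \<infinity>\<close> carrying \<open>f x\<close>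
  at time 0.  Two consecutive steps commute.  If a released parameter lies between them they
  are conditionally independent; otherwise they fall into the same gap, and the consistency of
  Brownian bridges, an identity between products of two Gaussian densities, exchanges them.
  Hence the joint law does not depend on the processing order.  Processing \<open>\<rho>\<close> first shows
  that its output has law \<open>G\<^sub>\<rho>(x)\<close>; processing the parameters in decreasing order shows that
  \<open>f x\<close> is not consulted after the output at \<open>max S\<close>, which yields a release kernel independent
  of \<open>x\<close>.\<close>

section \<open>Gaussian laws\<close>

lemma gauss_in_prob_algebra: "gauss m v \<in> space (prob_algebra borel)"
  unfolding gauss_def space_prob_algebra
  by (auto simp: prob_space_return prob_space_normal_density)

lemma sets_gauss [simp, measurable_cong]: "sets (gauss m v) = sets borel"
  using gauss_in_prob_algebra[of m v] by (simp add: space_prob_algebra)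

lemma prob_space_gauss: "prob_space (gauss m v)"
  using gauss_in_prob_algebra[of m v] by (simp add: space_prob_algebra)

lemma space_gauss_not_empty: "space (gauss m v) \<noteq> {}"
  using prob_space_gauss by (rule prob_space.not_empty)

lemma gauss_eq_distr_shift: "gauss m v = distr (gauss 0 v) borel (\<lambda>z. m + z)"
proof (cases "v \<le> 0")
  case True
  then show ?thesis by (simp add: gauss_def distr_return)
next
  case False
  let ?N = "density lborel (normal_density 0 (sqrt v))"
  interpret prob_space ?N
    using False by (intro prob_space_normal_density) simp
  have "distributed ?N lborel (\<lambda>x. x) (normal_density 0 (sqrt v))"
    by (auto simp: distributed_def distr_id2)
  from normal_density_affine[OF this, of 1 m] False
  have "distr ?N lborel (\<lambda>x. m + x) = density lborel (normal_density m (sqrt v))"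
    by (simp add: distributed_def)
  then show ?thesis
    using False by (simp add: gauss_def cong: distr_cong)
qed

lemma nn_integral_gauss:
  assumes "0 < v" "f \<in> borel_measurable borel"
  shows "(\<integral>\<^sup>+y. f y \<partial>gauss m v) = (\<integral>\<^sup>+y. ennreal (normal_density m (sqrt v) y) * f y \<partial>lborel)"
  using assms by (simp add: gauss_def nn_integral_density)

abbreviation gauss_density :: "real \<Rightarrow> real \<Rightarrow> real \<Rightarrow> real" where
  "gauss_density m v \<equiv> normal_density m (sqrt v)"

lemma gauss_density_mult_eq:
  assumes "0 < v1" "0 < v2" "0 < w1" "0 < w2" "v1 * v2 = w1 * w2"
    and "(x - m1)\<^sup>2 / v1 + (y - m2)\<^sup>2 / v2 = (y - n1)\<^sup>2 / w1 + (x - n2)\<^sup>2 / w2"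
  shows "gauss_density m1 v1 x * gauss_density m2 v2 y = gauss_density n1 w1 y * gauss_density n2 w2 x"
proof -
  have dens: "gauss_density m v x = exp (- ((x - m)\<^sup>2 / v) / 2) / sqrt (2 * pi * v)"
    if "0 < v" for m v x
    using that by (simp add: normal_density_def)
  have prod: "exp p / sqrt q * (exp p' / sqrt q') = exp (p + p') / sqrt (q * q')" for p q p' q' :: real
    by (simp add: exp_add real_sqrt_mult)
  have sum: "- p / 2 + - p' / 2 = - (p + p') / 2" for p p' :: real
    by simp
  have "2 * pi * v1 * (2 * pi * v2) = 2 * pi * w1 * (2 * pi * w2)"
    using assms(5) by (simp add: algebra_simps)
  then show ?thesis
    unfolding dens[OF assms(1)] dens[OF assms(2)] dens[OF assms(3)] dens[OF assms(4)] prod sum assms(6)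
    by simp
qed

definition gauss_pair :: "real \<Rightarrow> real \<Rightarrow> (real \<Rightarrow> real) \<Rightarrow> real \<Rightarrow> (real \<times> real) measure" where
  "gauss_pair m1 v1 m2 v2 = bind (gauss m1 v1) (\<lambda>x. distr (gauss (m2 x) v2) (borel \<Otimes>\<^sub>M borel) (\<lambda>y. (x, y)))"

lemma measurable_gauss_pair_kernel:
  assumes [measurable]: "m2 \<in> borel_measurable borel"
  shows "(\<lambda>x. distr (gauss (m2 x) v2) (borel \<Otimes>\<^sub>M borel) (\<lambda>y. (x, y)))
           \<in> borel \<rightarrow>\<^sub>M prob_algebra (borel \<Otimes>\<^sub>M borel)"
proof -
  have "distr (gauss (m2 x) v2) (borel \<Otimes>\<^sub>M borel) (\<lambda>y. (x, y))
      = distr (gauss 0 v2) (borel \<Otimes>\<^sub>M borel) (\<lambda>z. (x, m2 x + z))" for x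
    by (subst gauss_eq_distr_shift) (simp add: distr_distr comp_def)
  moreover have "(\<lambda>x. distr (gauss 0 v2) (borel \<Otimes>\<^sub>M borel) (\<lambda>z. (x, m2 x + z)))
      \<in> borel \<rightarrow>\<^sub>M prob_algebra (borel \<Otimes>\<^sub>M borel)"
  proof (rule measurable_distr_prob_space2)
    show "(\<lambda>x. gauss 0 v2) \<in> borel \<rightarrow>\<^sub>M prob_algebra borel"
      using gauss_in_prob_algebra by simp
  qed measurable
  ultimately show ?thesis
    by simp
qed

lemma measurable_gauss_pair_kernel_subprob:
  "m2 \<in> borel_measurable borel \<Longrightarrow> (\<lambda>x. distr (gauss (m2 x) v2) (borel \<Otimes>\<^sub>M borel) (\<lambda>y. (x, y)))
     \<in> gauss m1 v1 \<rightarrow>\<^sub>M subprob_algebra (borel \<Otimes>\<^sub>M borel)"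
  using measurable_prob_algebraD[OF measurable_gauss_pair_kernel]
  by (simp add: measurable_cong_sets[OF sets_gauss refl])

lemma sets_gauss_pair:
  assumes "m2 \<in> borel_measurable borel"
  shows "sets (gauss_pair m1 v1 m2 v2) = sets (borel \<Otimes>\<^sub>M borel)"
  unfolding gauss_pair_def
  using sets_bind'[OF gauss_in_prob_algebra measurable_gauss_pair_kernel[OF assms]] by simp

lemma gauss_pair_degenerate:
  assumes [measurable]: "k \<in> borel_measurable borel"
  shows "gauss_pair m 0 k 0 = return (borel \<Otimes>\<^sub>M borel) (m, k m)"
proof -
  have zero: "gauss x 0 = return borel x" for x
    by (simp add: gauss_def)
  have "gauss_pair m 0 k 0 = distr (gauss (k m) 0) (borel \<Otimes>\<^sub>M borel) (\<lambda>y. (m, y))"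
    unfolding gauss_pair_def zero[of m]
    by (rule bind_return[OF measurable_prob_algebraD[OF measurable_gauss_pair_kernel]]) simp_all
  then show ?thesis
    by (simp add: zero distr_return)
qed

lemma nn_integral_gauss_pair:
  assumes "0 < v1" "0 < v2" and [measurable]: "m2 \<in> borel_measurable borel"
    and [measurable]: "f \<in> borel_measurable (borel \<Otimes>\<^sub>M borel)"
  shows "(\<integral>\<^sup>+z. f z \<partial>gauss_pair m1 v1 m2 v2)
       = (\<integral>\<^sup>+x. \<integral>\<^sup>+y. ennreal (gauss_density m1 v1 x * gauss_density (m2 x) v2 y) * f (x, y) \<partial>lborel \<partial>lborel)"
proof -
  have inner: "(\<integral>\<^sup>+z. f z \<partial>distr (gauss (m2 x) v2) (borel \<Otimes>\<^sub>M borel) (\<lambda>y. (x, y)))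
      = (\<integral>\<^sup>+y. ennreal (gauss_density (m2 x) v2 y) * f (x, y) \<partial>lborel)" for x
    using assms(2) by (simp add: nn_integral_distr nn_integral_gauss)
  have "(\<lambda>(x, y). ennreal (gauss_density (m2 x) v2 y) * f (x, y)) \<in> borel_measurable (borel \<Otimes>\<^sub>M lborel)"
    unfolding normal_density_def by (simp add: measurable_cong_sets[OF sets_pair_measure_cong[OF refl sets_lborel] refl])
  from lborel.borel_measurable_nn_integral[OF this]
  have [measurable]: "(\<lambda>x. \<integral>\<^sup>+y. ennreal (gauss_density (m2 x) v2 y) * f (x, y) \<partial>lborel) \<in> borel_measurable borel"
    by simp
  have "(\<integral>\<^sup>+z. f z \<partial>gauss_pair m1 v1 m2 v2)
      = (\<integral>\<^sup>+x. \<integral>\<^sup>+y. ennreal (gauss_density (m2 x) v2 y) * f (x, y) \<partial>lborel \<partial>gauss m1 v1)"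
    unfolding gauss_pair_def
    by (simp add: nn_integral_bind[OF _ measurable_gauss_pair_kernel_subprob] inner)
  also have "\<dots> = (\<integral>\<^sup>+x. ennreal (gauss_density m1 v1 x)
                     * (\<integral>\<^sup>+y. ennreal (gauss_density (m2 x) v2 y) * f (x, y) \<partial>lborel) \<partial>lborel)"
    using assms(1) by (simp add: nn_integral_gauss)
  also have "\<dots> = (\<integral>\<^sup>+x. \<integral>\<^sup>+y. ennreal (gauss_density m1 v1 x * gauss_density (m2 x) v2 y) * f (x, y) \<partial>lborel \<partial>lborel)"
    by (simp add: nn_integral_cmult[symmetric] ennreal_mult mult.assoc)
  finally show ?thesis .
qed

lemma gauss_pair_swapI:
  assumes [measurable]: "m2 \<in> borel_measurable borel" "n2 \<in> borel_measurable borel"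
    and pos: "0 < v1" "0 < v2" "0 < w1" "0 < w2"
    and dens: "\<And>x y. gauss_density m1 v1 x * gauss_density (m2 x) v2 y
                     = gauss_density n1 w1 y * gauss_density (n2 y) w2 x"
  shows "gauss_pair m1 v1 m2 v2 = distr (gauss_pair n1 w1 n2 w2) (borel \<Otimes>\<^sub>M borel) (\<lambda>(y, x). (x, y))"
proof (rule measure_eqI)
  show "sets (gauss_pair m1 v1 m2 v2) = sets (distr (gauss_pair n1 w1 n2 w2) (borel \<Otimes>\<^sub>M borel) (\<lambda>(y, x). (x, y)))"
    by (simp add: sets_gauss_pair)
next
  fix A assume "A \<in> sets (gauss_pair m1 v1 m2 v2)"
  then have [measurable]: "A \<in> sets (borel \<Otimes>\<^sub>M borel)"
    by (simp add: sets_gauss_pair)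
  have "(\<lambda>(x, y). ennreal (gauss_density n1 w1 y * gauss_density (n2 y) w2 x) * indicator A (x, y))
      \<in> borel_measurable (lborel \<Otimes>\<^sub>M lborel)"
    unfolding normal_density_def
    by (simp add: measurable_cong_sets[OF sets_pair_measure_cong[OF sets_lborel sets_lborel] refl])
  note Fubini = lborel_pair.Fubini'[OF this, symmetric]
  have "emeasure (gauss_pair m1 v1 m2 v2) A = (\<integral>\<^sup>+z. indicator A z \<partial>gauss_pair m1 v1 m2 v2)"
    by (simp add: sets_gauss_pair)
  also have "\<dots> = (\<integral>\<^sup>+x. \<integral>\<^sup>+y. ennreal (gauss_density n1 w1 y * gauss_density (n2 y) w2 x)
                       * indicator A (x, y) \<partial>lborel \<partial>lborel)"
    using pos by (simp add: nn_integral_gauss_pair dens)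
  also have "\<dots> = (\<integral>\<^sup>+y. \<integral>\<^sup>+x. ennreal (gauss_density n1 w1 y * gauss_density (n2 y) w2 x)
                       * indicator A (x, y) \<partial>lborel \<partial>lborel)"
    by (rule Fubini)
  also have "\<dots> = (\<integral>\<^sup>+z. indicator A (case z of (y, x) \<Rightarrow> (x, y)) \<partial>gauss_pair n1 w1 n2 w2)"
    using pos by (simp add: nn_integral_gauss_pair split_beta')
  also have "\<dots> = (\<integral>\<^sup>+z. indicator A z \<partial>distr (gauss_pair n1 w1 n2 w2) (borel \<Otimes>\<^sub>M borel) (\<lambda>(y, x). (x, y)))"
    by (rule nn_integral_distr[symmetric]) (simp_all add: measurable_cong_sets[OF sets_gauss_pair refl])
  also have "\<dots> = emeasure (distr (gauss_pair n1 w1 n2 w2) (borel \<Otimes>\<^sub>M borel) (\<lambda>(y, x). (x, y))) A"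
    by simp
  finally show "emeasure (gauss_pair m1 v1 m2 v2) A
      = emeasure (distr (gauss_pair n1 w1 n2 w2) (borel \<Otimes>\<^sub>M borel) (\<lambda>(y, x). (x, y))) A" .
qed

lemma gauss_pair_const: "gauss_pair m v (\<lambda>_. n) w = gauss m v \<Otimes>\<^sub>M gauss n w"
proof -
  interpret pair_prob_space "gauss m v" "gauss n w"
    by (simp add: pair_prob_space_def pair_sigma_finite_def prob_space_gauss prob_space_imp_sigma_finite)
  have "sets (gauss m v \<Otimes>\<^sub>M gauss n w) = sets (borel \<Otimes>\<^sub>M borel)"
    by (rule sets_pair_measure_cong) simp_all
  then have "return (gauss m v \<Otimes>\<^sub>M gauss n w) = return (borel \<Otimes>\<^sub>M borel)"
    by (rule return_sets_cong)
  then have "bind (gauss n w) (\<lambda>y. return (gauss m v \<Otimes>\<^sub>M gauss n w) (x, y))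
      = distr (gauss n w) (borel \<Otimes>\<^sub>M borel) (\<lambda>y. (x, y))" for x
    by (simp add: bind_return_distr' space_gauss_not_empty)
  then show ?thesis
    unfolding gauss_pair_def by (subst pair_measure_eq_bind) simp
qed

lemma gauss_pair_const_swap:
  "gauss_pair m v (\<lambda>_. n) w = distr (gauss_pair n w (\<lambda>_. m) v) (borel \<Otimes>\<^sub>M borel) (\<lambda>(y, x). (x, y))"
proof -
  interpret pair_sigma_finite "gauss m v" "gauss n w"
    by (simp add: pair_sigma_finite_def prob_space_gauss prob_space_imp_sigma_finite)
  have "sets (gauss m v \<Otimes>\<^sub>M gauss n w) = sets (borel \<Otimes>\<^sub>M borel)"
    by (rule sets_pair_measure_cong) simp_all
  then show ?thesis
    unfolding gauss_pair_const by (subst distr_pair_swap) (intro distr_cong, auto)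
qed

section \<open>Brownian bridge parameters\<close>

text \<open>Here \<open>al\<close> is the lower neighbour \<open>\<rho>\<^sub>k\<close> and \<open>c = 1 / \<rho>\<^sub>k\<^sub>+\<^sub>1\<close>, with 0 standing for a
  missing neighbour.  On the time scale \<open>t = 1 / \<rho>\<close> these are the mean and the variance (per unit
  of \<open>D\<^sup>2 / 2\<close>) at time \<open>1 / r\<close> of a Brownian bridge pinned to \<open>H\<close> at time \<open>c\<close> and to \<open>L\<close> at
  time \<open>1 / al\<close>; for \<open>al = 0\<close> only the pinning at \<open>c\<close> remains.\<close>

definition bridge_mean :: "real \<Rightarrow> real \<Rightarrow> real \<Rightarrow> real \<Rightarrow> real \<Rightarrow> real" where
  "bridge_mean al c L H r = ((1 - al / r) * H + (al / r - al * c) * L) / (1 - al * c)"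

definition bridge_var :: "real \<Rightarrow> real \<Rightarrow> real \<Rightarrow> real" where
  "bridge_var al c r = (1 - al / r) * (1 / r - c) / (1 - al * c)"

lemma bridge_mean_0 [simp]: "bridge_mean 0 c L H r = H"
  by (simp add: bridge_mean_def)

lemma bridge_var_0 [simp]: "bridge_var 0 c r = 1 / r - c"
  by (simp add: bridge_var_def)

lemma bridge_mean_time:
  "0 < al \<Longrightarrow> al * c \<noteq> 1 \<Longrightarrow> r \<noteq> 0 \<Longrightarrow>
     bridge_mean al c L H r = H + (1 / r - c) * (L - H) / (1 / al - c)"
  unfolding bridge_mean_def by (simp add: field_simps)

lemma bridge_var_time:
  "0 < al \<Longrightarrow> al * c \<noteq> 1 \<Longrightarrow> r \<noteq> 0 \<Longrightarrow>
     bridge_var al c r = ((1 / al - c) - (1 / r - c)) * (1 / r - c) / (1 / al - c)"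
  unfolding bridge_var_def by (simp add: field_simps)

lemma bridge_var_pos:
  assumes "0 \<le> al" "al < r" "0 \<le> c" "c * r < 1"
  shows "0 < bridge_var al c r"
proof -
  have "0 < r"
    using assms by linarith
  have "c * al \<le> c * r"
    using assms by (intro mult_left_mono) auto
  then have "0 < 1 - al * c"
    using assms by (simp add: mult.commute)
  moreover have "0 < 1 - al / r" "0 < 1 / r - c"
    using assms \<open>0 < r\<close> by (simp_all add: field_simps mult.commute)
  ultimately show ?thesis
    unfolding bridge_var_def by simp
qed

lemma bridge_gap_times:
  fixes al a b c :: real
  assumes "0 \<le> al" "al < a" "a < b" "0 \<le> c" "c * b < 1"
  shows "0 < a" "0 < 1 / b - c" "1 / b - c < 1 / a - c" "a * c \<noteq> 1" "al * c \<noteq> 1"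
    and "0 < al \<Longrightarrow> 1 / a - c < 1 / al - c"
proof -
  show "0 < a"
    using assms by linarith
  then show "0 < 1 / b - c" "1 / b - c < 1 / a - c" "0 < al \<Longrightarrow> 1 / a - c < 1 / al - c"
    using assms by (simp_all add: field_simps mult.commute)
  have "c * a \<le> c * b" "c * al \<le> c * b"
    using assms by (auto intro: mult_left_mono)
  then show "a * c \<noteq> 1" "al * c \<noteq> 1"
    using assms by (simp_all add: mult.commute)
qed

lemma bridge_means_commute:
  assumes gap: "0 \<le> al" "al < a" "a < b" "0 \<le> c" "c * b < 1"
  shows "bridge_mean al (1 / b) L (bridge_mean al c L H b) a = bridge_mean al c L H a"
    and "bridge_mean a c (bridge_mean al c L H a) H b = bridge_mean al c L H b"
proof -
  note times = bridge_gap_times[OF gap]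
  define A B where "A = 1 / a - c" and "B = 1 / b - c"
  have "0 < B" "B < A"
    using times by (simp_all add: A_def B_def)
  have m2: "bridge_mean a c x H b = H + B * (x - H) / A" for x
    using times gap by (simp add: bridge_mean_time A_def B_def)
  have "bridge_mean al (1 / b) L (bridge_mean al c L H b) a = bridge_mean al c L H a
      \<and> bridge_mean a c (bridge_mean al c L H a) H b = bridge_mean al c L H b"
  proof (cases "al = 0")
    case True
    then show ?thesis
      by (simp add: m2)
  next
    case False
    with gap have "0 < al" by simp
    define T where "T = 1 / al - c"
    have "A < T"
      using times \<open>0 < al\<close> by (simp add: A_def T_def)
    have "al * (1 / b) \<noteq> 1"
      using gap by (simp add: field_simps)
    then have m1: "bridge_mean al c L H a = H + A * (L - H) / T"
      "bridge_mean al c L H b = H + B * (L - H) / T"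
      "bridge_mean al (1 / b) L y a = y + (A - B) * (L - y) / (T - B)" for y
      using times gap \<open>0 < al\<close> by (simp_all add: bridge_mean_time A_def B_def T_def field_simps)
    show ?thesis
      using \<open>0 < B\<close> \<open>B < A\<close> \<open>A < T\<close> by (simp add: m1 m2 field_simps)
  qed
  then show "bridge_mean al (1 / b) L (bridge_mean al c L H b) a = bridge_mean al c L H a"
    and "bridge_mean a c (bridge_mean al c L H a) H b = bridge_mean al c L H b"
    by auto
qed

lemma bridge_densities_commute:
  assumes gap: "0 \<le> al" "al < a" "a < b" "0 \<le> c" "c * b < 1" and "0 < s"
  shows "gauss_density (bridge_mean al c L H a) (s * bridge_var al c a) x
           * gauss_density (bridge_mean a c x H b) (s * bridge_var a c b) y
       = gauss_density (bridge_mean al c L H b) (s * bridge_var al c b) y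
           * gauss_density (bridge_mean al (1 / b) L y a) (s * bridge_var al (1 / b) a) x"
proof -
  note times = bridge_gap_times[OF gap]
  define A B where "A = 1 / a - c" and "B = 1 / b - c"
  have "0 < B" "B < A"
    using times by (simp_all add: A_def B_def)
  have m2: "bridge_mean a c x H b = H + B * (x - H) / A"
    and v2: "bridge_var a c b = (A - B) * B / A"
    using times gap by (simp_all add: bridge_mean_time bridge_var_time A_def B_def)
  show ?thesis
  proof (cases "al = 0")
    case True
    have "A \<noteq> 0" "A - B \<noteq> 0" "B \<noteq> 0" "s \<noteq> 0"
      using \<open>0 < B\<close> \<open>B < A\<close> \<open>0 < s\<close> by auto
    then have "(x - H)\<^sup>2 / (s * A) + (y - (H + B * (x - H) / A))\<^sup>2 / (s * ((A - B) * B / A))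
        = (y - H)\<^sup>2 / (s * B) + (x - y)\<^sup>2 / (s * (A - B))"
      by (simp add: divide_simps) algebra
    moreover have "s * A * (s * ((A - B) * B / A)) = s * B * (s * (A - B))"
      using \<open>A \<noteq> 0\<close> by (simp add: field_simps)
    ultimately show ?thesis
      using True \<open>0 < B\<close> \<open>B < A\<close> \<open>0 < s\<close>
      by (intro gauss_density_mult_eq) (simp_all add: m2 v2 A_def B_def)
  next
    case False
    with gap have "0 < al" by simp
    define T where "T = 1 / al - c"
    have "A < T"
      using times \<open>0 < al\<close> by (simp add: A_def T_def)
    have "al * (1 / b) \<noteq> 1"
      using gap by (simp add: field_simps)
    then have m1: "bridge_mean al c L H a = H + A * (L - H) / T"
      "bridge_mean al c L H b = H + B * (L - H) / T"
      "bridge_mean al (1 / b) L y a = y + (A - B) * (L - y) / (T - B)"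
      and v1: "bridge_var al c a = (T - A) * A / T"
      "bridge_var al c b = (T - B) * B / T"
      "bridge_var al (1 / b) a = (T - A) * (A - B) / (T - B)"
      using times gap \<open>0 < al\<close>
      by (simp_all add: bridge_mean_time bridge_var_time A_def B_def T_def field_simps)
    have "A \<noteq> 0" "T \<noteq> 0" "T - A \<noteq> 0" "A - B \<noteq> 0" "T - B \<noteq> 0" "B \<noteq> 0" "s \<noteq> 0"
      using \<open>0 < B\<close> \<open>B < A\<close> \<open>A < T\<close> \<open>0 < s\<close> by auto
    then have "(x - (H + A * (L - H) / T))\<^sup>2 / (s * ((T - A) * A / T))
          + (y - (H + B * (x - H) / A))\<^sup>2 / (s * ((A - B) * B / A))
        = (y - (H + B * (L - H) / T))\<^sup>2 / (s * ((T - B) * B / T))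
          + (x - (y + (A - B) * (L - y) / (T - B)))\<^sup>2 / (s * ((T - A) * (A - B) / (T - B)))"
      by (simp add: divide_simps) algebra
    moreover have "s * ((T - A) * A / T) * (s * ((A - B) * B / A))
        = s * ((T - B) * B / T) * (s * ((T - A) * (A - B) / (T - B)))"
      using \<open>A \<noteq> 0\<close> \<open>T \<noteq> 0\<close> \<open>T - B \<noteq> 0\<close> by (simp add: field_simps)
    ultimately show ?thesis
      using \<open>0 < B\<close> \<open>B < A\<close> \<open>A < T\<close> \<open>0 < s\<close>
      by (intro gauss_density_mult_eq) (simp_all add: m1 v1 m2 v2)
  qed
qed

lemma bridge_pair_swap:
  assumes gap: "0 \<le> al" "al < a" "a < b" "0 \<le> c" "c * b < 1" and "0 \<le> s"
  shows "gauss_pair (bridge_mean al c L H a) (s * bridge_var al c a)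
           (\<lambda>x. bridge_mean a c x H b) (s * bridge_var a c b)
       = distr (gauss_pair (bridge_mean al c L H b) (s * bridge_var al c b)
                  (\<lambda>y. bridge_mean al (1 / b) L y a) (s * bridge_var al (1 / b) a))
           (borel \<Otimes>\<^sub>M borel) (\<lambda>(y, x). (x, y))"
proof -
  have [measurable]: "(\<lambda>x. bridge_mean a c x H b) \<in> borel_measurable borel"
    "(\<lambda>y. bridge_mean al (1 / b) L y a) \<in> borel_measurable borel"
    unfolding bridge_mean_def by measurable
  show ?thesis
  proof (cases "s = 0")
    case True
    have "(\<lambda>(y, x). (x, y)) \<in> (borel \<Otimes>\<^sub>M borel :: (real \<times> real) measure) \<rightarrow>\<^sub>M borel \<Otimes>\<^sub>M borel"
      by measurable
    then show ?thesis
      using True bridge_means_commute[OF gap, of L H]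
      by (simp add: gauss_pair_degenerate distr_return space_pair_measure)
  next
    case False
    with \<open>0 \<le> s\<close> have "0 < s" by simp
    have "c * a \<le> c * b"
      using gap by (intro mult_left_mono) auto
    then have "0 < bridge_var al c a" "0 < bridge_var a c b" "0 < bridge_var al c b"
      "0 < bridge_var al (1 / b) a"
      using gap by (auto intro!: bridge_var_pos simp: field_simps)
    then show ?thesis
      using \<open>0 < s\<close>
      by (intro gauss_pair_swapI bridge_densities_commute[OF gap]) simp_all
  qed
qed

section \<open>Neighbouring parameters and single steps\<close>

abbreviation Pi_borel :: "real set \<Rightarrow> (real \<Rightarrow> real) measure" where
  "Pi_borel S \<equiv> PiM S (\<lambda>_. borel)"

lemma measurable_fun_upd_insert:
  "f \<in> N \<rightarrow>\<^sub>M PiM I M \<Longrightarrow> g \<in> N \<rightarrow>\<^sub>M M i \<Longrightarrow> (\<lambda>\<omega>. (f \<omega>)(i := g \<omega>)) \<in> N \<rightarrow>\<^sub>M PiM (insert i I) M"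
  by (rule measurable_fun_upd[where J = I]) auto

lemma measurable_fun_upd_const:
  "Y \<in> space (PiM I M) \<Longrightarrow> (\<lambda>x. Y(i := x)) \<in> M i \<rightarrow>\<^sub>M PiM (insert i I) M"
  by (rule measurable_fun_upd_insert) simp_all

lemma measurable_fun_upd2:
  assumes "Y \<in> space (PiM I M)"
  shows "(\<lambda>(x, y). Y(a := x, b := y)) \<in> M a \<Otimes>\<^sub>M M b \<rightarrow>\<^sub>M PiM (insert b (insert a I)) M"
proof -
  have "(\<lambda>p. Y(a := fst p)) \<in> M a \<Otimes>\<^sub>M M b \<rightarrow>\<^sub>M PiM (insert a I) M"
    by (rule measurable_fun_upd_insert[OF measurable_const[OF assms]]) simp
  then have "(\<lambda>p. Y(a := fst p, b := snd p)) \<in> M a \<Otimes>\<^sub>M M b \<rightarrow>\<^sub>M PiM (insert b (insert a I)) M"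
    by (rule measurable_fun_upd_insert) simp
  then show ?thesis
    by (simp add: case_prod_beta')
qed

definition lower_nb :: "real set \<Rightarrow> real \<Rightarrow> real option" where
  "lower_nb P r = (if \<exists>x\<in>P. x \<le> r then Some (Max {x\<in>P. x \<le> r}) else None)"

definition upper_nb :: "real set \<Rightarrow> real \<Rightarrow> real option" where
  "upper_nb P r = (if \<exists>x\<in>P. r < x then Some (Min {x\<in>P. r < x}) else None)"

lemma lower_nb_Some_iff:
  assumes "finite P"
  shows "lower_nb P r = Some l \<longleftrightarrow> l \<in> P \<and> l \<le> r \<and> (\<forall>x\<in>P. x \<le> r \<longrightarrow> x \<le> l)"
proof
  assume "lower_nb P r = Some l"
  then have "{x\<in>P. x \<le> r} \<noteq> {}" "l = Max {x\<in>P. x \<le> r}"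
    by (auto simp: lower_nb_def split: if_splits)
  then show "l \<in> P \<and> l \<le> r \<and> (\<forall>x\<in>P. x \<le> r \<longrightarrow> x \<le> l)"
    using Max_in[of "{x\<in>P. x \<le> r}"] Max_ge[of "{x\<in>P. x \<le> r}"] assms by auto
qed (use assms in \<open>auto simp: lower_nb_def intro!: Max_eqI\<close>)

lemma upper_nb_Some_iff:
  assumes "finite P"
  shows "upper_nb P r = Some h \<longleftrightarrow> h \<in> P \<and> r < h \<and> (\<forall>x\<in>P. r < x \<longrightarrow> h \<le> x)"
proof
  assume "upper_nb P r = Some h"
  then have "{x\<in>P. r < x} \<noteq> {}" "h = Min {x\<in>P. r < x}"
    by (auto simp: upper_nb_def split: if_splits)
  then show "h \<in> P \<and> r < h \<and> (\<forall>x\<in>P. r < x \<longrightarrow> h \<le> x)"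
    using Min_in[of "{x\<in>P. r < x}"] Min_le[of "{x\<in>P. r < x}"] assms by auto
qed (use assms in \<open>auto simp: upper_nb_def intro!: Min_eqI\<close>)

lemma lower_nb_in: "finite P \<Longrightarrow> lower_nb P r = Some l \<Longrightarrow> l \<in> P"
  by (simp add: lower_nb_Some_iff)

lemma upper_nb_in: "finite P \<Longrightarrow> upper_nb P r = Some h \<Longrightarrow> h \<in> P"
  by (simp add: upper_nb_Some_iff)

lemma lower_nb_None_iff: "lower_nb P r = None \<longleftrightarrow> (\<forall>x\<in>P. r < x)"
  by (auto simp: lower_nb_def not_less[symmetric])

lemma upper_nb_None_iff: "upper_nb P r = None \<longleftrightarrow> (\<forall>x\<in>P. x \<le> r)"
  by (auto simp: upper_nb_def not_le[symmetric])

lemma lower_nb_cong: "{x\<in>P. x \<le> r} = {x\<in>Q. x \<le> s} \<Longrightarrow> lower_nb P r = lower_nb Q s"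
  unfolding lower_nb_def by (metis (no_types, lifting) mem_Collect_eq)

lemma upper_nb_cong: "{x\<in>P. r < x} = {x\<in>Q. s < x} \<Longrightarrow> upper_nb P r = upper_nb Q s"
  unfolding upper_nb_def by (metis (no_types, lifting) mem_Collect_eq)

lemma neighbours_across:
  assumes fin: "finite P" and "a \<notin> P" "b \<notin> P" "p \<in> P" "a < p" "p < b"
  shows "lower_nb (insert a P) b = lower_nb P b" "upper_nb (insert a P) b = upper_nb P b"
    and "lower_nb (insert b P) a = lower_nb P a" "upper_nb (insert b P) a = upper_nb P a"
proof -
  obtain l where l: "lower_nb P b = Some l"
    using assms by (cases "lower_nb P b") (auto simp: lower_nb_None_iff)
  with assms have "p \<le> l"
    by (simp add: lower_nb_Some_iff)
  with l assms have "lower_nb (insert a P) b = Some l"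
    by (auto simp: lower_nb_Some_iff)
  with l show "lower_nb (insert a P) b = lower_nb P b"
    by simp
  obtain h where h: "upper_nb P a = Some h"
    using assms by (cases "upper_nb P a") (auto simp: upper_nb_None_iff)
  with assms have "h \<le> p"
    by (simp add: upper_nb_Some_iff)
  with h assms have "upper_nb (insert b P) a = Some h"
    by (auto simp: upper_nb_Some_iff)
  with h show "upper_nb (insert b P) a = upper_nb P a"
    by simp
  show "upper_nb (insert a P) b = upper_nb P b" "lower_nb (insert b P) a = lower_nb P a"
    using assms by (auto intro: upper_nb_cong lower_nb_cong)
qed

lemma neighbours_within_gap:
  assumes fin: "finite P" and "a < b" "a \<notin> P" "b \<notin> P" and gap: "\<forall>p\<in>P. p < a \<or> b < p"
  shows "lower_nb P b = lower_nb P a" "upper_nb P b = upper_nb P a"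
    and "lower_nb (insert a P) b = Some a" "upper_nb (insert a P) b = upper_nb P a"
    and "lower_nb (insert b P) a = lower_nb P a" "upper_nb (insert b P) a = Some b"
  using assms by (auto intro!: lower_nb_cong upper_nb_cong simp: lower_nb_Some_iff upper_nb_Some_iff)

definition step_mean :: "real \<Rightarrow> real set \<Rightarrow> (real \<Rightarrow> real) \<Rightarrow> real \<Rightarrow> real" where
  "step_mean fx P Y r = bridge_mean
     (case lower_nb P r of None \<Rightarrow> 0 | Some l \<Rightarrow> l) (case upper_nb P r of None \<Rightarrow> 0 | Some h \<Rightarrow> 1 / h)
     (case lower_nb P r of None \<Rightarrow> 0 | Some l \<Rightarrow> Y l) (case upper_nb P r of None \<Rightarrow> fx | Some h \<Rightarrow> Y h) r"

definition step_var :: "real \<Rightarrow> real set \<Rightarrow> real \<Rightarrow> real" where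
  "step_var D P r = D\<^sup>2 / 2 * bridge_var
     (case lower_nb P r of None \<Rightarrow> 0 | Some l \<Rightarrow> l) (case upper_nb P r of None \<Rightarrow> 0 | Some h \<Rightarrow> 1 / h) r"

lemma step_law_eq_gauss: "step_law D fx P Y r = gauss (step_mean fx P Y r) (step_var D P r)"
  unfolding step_law_def Let_def lower_nb_def[symmetric] upper_nb_def[symmetric]
  by (cases "lower_nb P r"; cases "upper_nb P r")
     (simp_all add: step_mean_def step_var_def bridge_mean_def bridge_var_def mult.commute)

lemma step_params_cong:
  assumes fin: "finite P" and "a \<notin> P" and "lower_nb Q r = lower_nb P r" "upper_nb Q r = upper_nb P r"
  shows "step_mean fx Q (Y(a := x)) r = step_mean fx P Y r" "step_var D Q r = step_var D P r"
  using assms lower_nb_in[OF fin, of r] upper_nb_in[OF fin, of r]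
  by (cases "lower_nb P r"; cases "upper_nb P r"; force simp: step_mean_def step_var_def)+

lemma measurable_step_mean [measurable]:
  assumes "finite P"
  shows "(\<lambda>Y. step_mean fx P Y r) \<in> borel_measurable (Pi_borel P)"
proof -
  have [measurable]: "(\<lambda>Y. case lower_nb P r of None \<Rightarrow> 0 | Some l \<Rightarrow> Y l) \<in> borel_measurable (Pi_borel P)"
    by (cases "lower_nb P r") (auto dest: lower_nb_in[OF assms])
  have [measurable]: "(\<lambda>Y. case upper_nb P r of None \<Rightarrow> fx | Some h \<Rightarrow> Y h) \<in> borel_measurable (Pi_borel P)"
    by (cases "upper_nb P r") (auto dest: upper_nb_in[OF assms])
  show ?thesis
    unfolding step_mean_def bridge_mean_def by measurable
qed

definition step_kernel :: "real \<Rightarrow> real \<Rightarrow> real set \<Rightarrow> real \<Rightarrow> (real \<Rightarrow> real) \<Rightarrow> (real \<Rightarrow> real) measure" where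
  "step_kernel D fx P r Y = distr (step_law D fx P Y r) (Pi_borel (insert r P)) (\<lambda>y. Y(r := y))"

lemma gauss_proc_rev_Cons:
  "gauss_proc_rev D fx (r # rs) = bind (gauss_proc_rev D fx rs) (step_kernel D fx (set rs) r)"
  by (simp add: step_kernel_def[abs_def])

declare gauss_proc_rev.simps(2) [simp del]

lemma measurable_step_kernel:
  assumes "finite P"
  shows "step_kernel D fx P r \<in> Pi_borel P \<rightarrow>\<^sub>M prob_algebra (Pi_borel (insert r P))"
proof -
  have "step_kernel D fx P r Y
      = distr (gauss 0 (step_var D P r)) (Pi_borel (insert r P)) (\<lambda>z. Y(r := step_mean fx P Y r + z))"
    if "Y \<in> space (Pi_borel P)" for Y
    using measurable_fun_upd_const[OF that]
    by (simp add: step_kernel_def step_law_eq_gauss gauss_eq_distr_shift[of "step_mean fx P Y r"]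
        distr_distr comp_def)
  moreover have "(\<lambda>Y. distr (gauss 0 (step_var D P r)) (Pi_borel (insert r P)) (\<lambda>z. Y(r := step_mean fx P Y r + z)))
      \<in> Pi_borel P \<rightarrow>\<^sub>M prob_algebra (Pi_borel (insert r P))"
  proof (rule measurable_distr_prob_space2)
    show "(\<lambda>Y. gauss 0 (step_var D P r)) \<in> Pi_borel P \<rightarrow>\<^sub>M prob_algebra borel"
      using gauss_in_prob_algebra by simp
    have "(\<lambda>p. (fst p)(r := step_mean fx P (fst p) r + snd p)) \<in> Pi_borel P \<Otimes>\<^sub>M borel \<rightarrow>\<^sub>M Pi_borel (insert r P)"
      using assms by (intro measurable_fun_upd_insert) simp_all
    then show "(\<lambda>(Y, z). Y(r := step_mean fx P Y r + z)) \<in> Pi_borel P \<Otimes>\<^sub>M borel \<rightarrow>\<^sub>M Pi_borel (insert r P)"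
      by (simp add: case_prod_beta')
  qed
  ultimately show ?thesis
    by (simp cong: measurable_cong)
qed

lemma gauss_proc_rev_in_prob_algebra:
  "gauss_proc_rev D fx rs \<in> space (prob_algebra (Pi_borel (set rs)))"
proof (induction rs)
  case Nil
  have "(\<lambda>_. undefined) \<in> space (Pi_borel {})"
    by (simp add: space_PiM)
  then show ?case
    by (simp add: space_prob_algebra prob_space_return)
next
  case (Cons r rs)
  have "step_kernel D fx (set rs) r \<in> Pi_borel (set rs) \<rightarrow>\<^sub>M prob_algebra (Pi_borel (set (r # rs)))"
    using measurable_step_kernel[of "set rs"] by simp
  from prob_space_bind'[OF Cons this] sets_bind'[OF Cons this] show ?case
    by (simp add: gauss_proc_rev_Cons space_prob_algebra)
qed

lemma sets_gauss_proc_rev [measurable_cong]: "sets (gauss_proc_rev D fx rs) = sets (Pi_borel (set rs))"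
  using gauss_proc_rev_in_prob_algebra[of D fx rs] by (simp add: space_prob_algebra)

lemma space_gauss_proc_rev: "space (gauss_proc_rev D fx rs) = space (Pi_borel (set rs))"
  using sets_gauss_proc_rev by (rule sets_eq_imp_space_eq)

lemma prob_space_gauss_proc_rev: "prob_space (gauss_proc_rev D fx rs)"
  using gauss_proc_rev_in_prob_algebra[of D fx rs] by (simp add: space_prob_algebra)

section \<open>Exchanging two steps\<close>

lemma measurable_step_mean_upd:
  assumes "finite P" "Y \<in> space (Pi_borel P)"
  shows "(\<lambda>x. step_mean fx (insert a P) (Y(a := x)) b) \<in> borel_measurable borel"
  using assms by (intro measurable_compose[OF measurable_fun_upd_const measurable_step_mean]) simp_all

definition step_pair :: "real \<Rightarrow> real \<Rightarrow> real set \<Rightarrow> (real \<Rightarrow> real) \<Rightarrow> real \<Rightarrow> real \<Rightarrow> (real \<times> real) measure" where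
  "step_pair D fx P Y a b = gauss_pair (step_mean fx P Y a) (step_var D P a)
     (\<lambda>x. step_mean fx (insert a P) (Y(a := x)) b) (step_var D (insert a P) b)"

lemma sets_step_pair:
  "finite P \<Longrightarrow> Y \<in> space (Pi_borel P) \<Longrightarrow> sets (step_pair D fx P Y a b) = sets (borel \<Otimes>\<^sub>M borel)"
  unfolding step_pair_def by (intro sets_gauss_pair measurable_step_mean_upd)

lemma bind_step_kernels:
  assumes fin: "finite P" and Y: "Y \<in> space (Pi_borel P)"
  shows "bind (step_kernel D fx P a Y) (step_kernel D fx (insert a P) b)
       = distr (step_pair D fx P Y a b) (Pi_borel (insert b (insert a P))) (\<lambda>(x, y). Y(a := x, b := y))"
proof -
  let ?m1 = "step_mean fx P Y a" and ?v1 = "step_var D P a"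
  let ?m2 = "\<lambda>x. step_mean fx (insert a P) (Y(a := x)) b" and ?v2 = "step_var D (insert a P) b"
  let ?h = "\<lambda>(x, y). Y(a := x, b := y)"
  have h: "?h \<in> borel \<Otimes>\<^sub>M borel \<rightarrow>\<^sub>M Pi_borel (insert b (insert a P))"
    using Y by (rule measurable_fun_upd2)
  have upd: "(\<lambda>x. Y(a := x)) \<in> gauss ?m1 ?v1 \<rightarrow>\<^sub>M Pi_borel (insert a P)"
    using measurable_fun_upd_const[OF Y] by (simp cong: measurable_cong_sets)
  have "bind (step_kernel D fx P a Y) (step_kernel D fx (insert a P) b)
      = bind (distr (gauss ?m1 ?v1) (Pi_borel (insert a P)) (\<lambda>x. Y(a := x))) (step_kernel D fx (insert a P) b)"
    by (simp add: step_kernel_def step_law_eq_gauss)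
  also have "\<dots> = bind (gauss ?m1 ?v1) (\<lambda>x. step_kernel D fx (insert a P) b (Y(a := x)))"
    by (rule bind_distr[OF upd measurable_prob_algebraD[OF measurable_step_kernel] space_gauss_not_empty])
       (simp add: fin)
  also have "\<dots> = bind (gauss ?m1 ?v1)
      (\<lambda>x. distr (distr (gauss (?m2 x) ?v2) (borel \<Otimes>\<^sub>M borel) (\<lambda>y. (x, y))) (Pi_borel (insert b (insert a P))) ?h)"
    using h by (simp add: distr_distr comp_def step_kernel_def step_law_eq_gauss)
  also have "\<dots> = distr (step_pair D fx P Y a b) (Pi_borel (insert b (insert a P))) ?h"
    unfolding step_pair_def gauss_pair_def
    by (rule distr_bind[symmetric, OF measurable_gauss_pair_kernel_subprob[OF measurable_step_mean_upd[OF fin Y]]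
        space_gauss_not_empty h])
  finally show ?thesis .
qed

lemma step_pair_across:
  assumes fin: "finite P" and "a \<notin> P" "b \<notin> P" "p \<in> P" "a < p" "p < b"
  shows "step_pair D fx P Y a b
           = gauss_pair (step_mean fx P Y a) (step_var D P a) (\<lambda>_. step_mean fx P Y b) (step_var D P b)"
    and "step_pair D fx P Y b a
           = gauss_pair (step_mean fx P Y b) (step_var D P b) (\<lambda>_. step_mean fx P Y a) (step_var D P a)"
proof -
  note nb = neighbours_across[OF assms]
  show "step_pair D fx P Y a b
      = gauss_pair (step_mean fx P Y a) (step_var D P a) (\<lambda>_. step_mean fx P Y b) (step_var D P b)"
    using step_params_cong[OF fin \<open>a \<notin> P\<close> nb(1,2)] by (simp add: step_pair_def)
  show "step_pair D fx P Y b a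
      = gauss_pair (step_mean fx P Y b) (step_var D P b) (\<lambda>_. step_mean fx P Y a) (step_var D P a)"
    using step_params_cong[OF fin \<open>b \<notin> P\<close> nb(3,4)] by (simp add: step_pair_def)
qed

lemma step_pair_within_gap:
  assumes fin: "finite P" and pos: "\<forall>x\<in>P. 0 < x" and "0 < a" "a < b" "a \<notin> P" "b \<notin> P"
    and gap: "\<forall>p\<in>P. p < a \<or> b < p"
  obtains al c L H where "0 \<le> al" "al < a" "0 \<le> c" "c * b < 1"
    and "step_pair D fx P Y a b = gauss_pair (bridge_mean al c L H a) (D\<^sup>2 / 2 * bridge_var al c a)
           (\<lambda>x. bridge_mean a c x H b) (D\<^sup>2 / 2 * bridge_var a c b)"
    and "step_pair D fx P Y b a = gauss_pair (bridge_mean al c L H b) (D\<^sup>2 / 2 * bridge_var al c b)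
           (\<lambda>y. bridge_mean al (1 / b) L y a) (D\<^sup>2 / 2 * bridge_var al (1 / b) a)"
proof -
  note nb = neighbours_within_gap[OF fin \<open>a < b\<close> \<open>a \<notin> P\<close> \<open>b \<notin> P\<close> gap]
  define al where "al = (case lower_nb P a of None \<Rightarrow> 0 | Some l \<Rightarrow> l)"
  define c where "c = (case upper_nb P a of None \<Rightarrow> 0 | Some h \<Rightarrow> 1 / h)"
  define L where "L = (case lower_nb P a of None \<Rightarrow> 0 | Some l \<Rightarrow> Y l)"
  define H where "H = (case upper_nb P a of None \<Rightarrow> fx | Some h \<Rightarrow> Y h)"
  have "0 \<le> al" "al < a"
    using assms by (auto simp: al_def lower_nb_Some_iff order.order_iff_strict split: option.split)
  have "0 \<le> c" "c * b < 1"
    using assms by (auto simp: c_def upper_nb_Some_iff field_simps split: option.split)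
  have params: "step_mean fx P Y a = bridge_mean al c L H a" "step_var D P a = D\<^sup>2 / 2 * bridge_var al c a"
    "step_mean fx P Y b = bridge_mean al c L H b" "step_var D P b = D\<^sup>2 / 2 * bridge_var al c b"
    by (simp_all add: step_mean_def step_var_def nb(1,2) al_def c_def L_def H_def)
  have mean_ab: "step_mean fx (insert a P) (Y(a := x)) b = bridge_mean a c x H b" for x
    using upper_nb_in[OF fin, of a] \<open>a \<notin> P\<close>
    by (cases "upper_nb P a") (auto simp: step_mean_def nb(3,4) c_def H_def)
  have mean_ba: "step_mean fx (insert b P) (Y(b := y)) a = bridge_mean al (1 / b) L y a" for y
    using lower_nb_in[OF fin, of a] \<open>b \<notin> P\<close>
    by (cases "lower_nb P a") (auto simp: step_mean_def nb(5,6) al_def L_def)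
  have var_ab_ba: "step_var D (insert a P) b = D\<^sup>2 / 2 * bridge_var a c b"
    "step_var D (insert b P) a = D\<^sup>2 / 2 * bridge_var al (1 / b) a"
    by (simp_all add: step_var_def nb(3-6) al_def c_def)
  show thesis
    by (rule that[of al c L H]) (use \<open>0 \<le> al\<close> \<open>al < a\<close> \<open>0 \<le> c\<close> \<open>c * b < 1\<close> in
        \<open>simp_all add: step_pair_def params mean_ab mean_ba var_ab_ba\<close>)
qed

lemma step_pair_swap:
  assumes fin: "finite P" and pos: "\<forall>x\<in>P. 0 < x" and "0 < a" "a < b" "a \<notin> P" "b \<notin> P"
  shows "step_pair D fx P Y a b = distr (step_pair D fx P Y b a) (borel \<Otimes>\<^sub>M borel) (\<lambda>(y, x). (x, y))"
proof (cases "\<exists>p\<in>P. a < p \<and> p < b")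
  case True
  then obtain p where p: "p \<in> P" "a < p" "p < b"
    by blast
  show ?thesis
    unfolding step_pair_across[OF fin \<open>a \<notin> P\<close> \<open>b \<notin> P\<close> p] by (rule gauss_pair_const_swap)
next
  case False
  then have "\<forall>p\<in>P. p < a \<or> b < p"
    using \<open>a \<notin> P\<close> \<open>b \<notin> P\<close> by (metis linorder_neqE_linordered_idom)
  with assms obtain al c L H where gap: "0 \<le> al" "al < a" "0 \<le> c" "c * b < 1"
    and pairs: "step_pair D fx P Y a b = gauss_pair (bridge_mean al c L H a) (D\<^sup>2 / 2 * bridge_var al c a)
           (\<lambda>x. bridge_mean a c x H b) (D\<^sup>2 / 2 * bridge_var a c b)"
      "step_pair D fx P Y b a = gauss_pair (bridge_mean al c L H b) (D\<^sup>2 / 2 * bridge_var al c b)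
           (\<lambda>y. bridge_mean al (1 / b) L y a) (D\<^sup>2 / 2 * bridge_var al (1 / b) a)"
    by (elim step_pair_within_gap)
  show ?thesis
    unfolding pairs using gap \<open>a < b\<close> by (intro bridge_pair_swap) simp_all
qed

lemma step_kernels_commute:
  assumes fin: "finite P" and pos: "\<forall>x\<in>P. 0 < x" and "0 < a" "0 < b" "a \<noteq> b" "a \<notin> P" "b \<notin> P"
    and Y: "Y \<in> space (Pi_borel P)"
  shows "bind (step_kernel D fx P a Y) (step_kernel D fx (insert a P) b)
       = bind (step_kernel D fx P b Y) (step_kernel D fx (insert b P) a)"
proof -
  have ordered: "bind (step_kernel D fx P a Y) (step_kernel D fx (insert a P) b)
      = bind (step_kernel D fx P b Y) (step_kernel D fx (insert b P) a)"
    if "0 < a" "a < b" "a \<notin> P" "b \<notin> P" for a b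
  proof -
    have swap: "(\<lambda>(y, x). (x, y)) \<in> step_pair D fx P Y b a \<rightarrow>\<^sub>M borel \<Otimes>\<^sub>M borel"
      using sets_step_pair[OF fin Y] by (simp cong: measurable_cong_sets)
    have "bind (step_kernel D fx P a Y) (step_kernel D fx (insert a P) b)
        = distr (step_pair D fx P Y a b) (Pi_borel (insert b (insert a P))) (\<lambda>(x, y). Y(a := x, b := y))"
      using fin Y by (rule bind_step_kernels)
    also have "\<dots> = distr (step_pair D fx P Y b a) (Pi_borel (insert b (insert a P)))
        ((\<lambda>(x, y). Y(a := x, b := y)) \<circ> (\<lambda>(y, x). (x, y)))"
      using that fin pos
      by (simp add: step_pair_swap distr_distr[OF measurable_fun_upd2[OF Y] swap])
    also have "(\<lambda>(x, y). Y(a := x, b := y)) \<circ> (\<lambda>(y, x). (x, y)) = (\<lambda>(x, y). Y(b := x, a := y))"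
      using \<open>a < b\<close> by (auto simp: fun_eq_iff)
    also have "distr (step_pair D fx P Y b a) (Pi_borel (insert b (insert a P))) \<dots>
        = bind (step_kernel D fx P b Y) (step_kernel D fx (insert b P) a)"
      using fin Y by (simp add: bind_step_kernels insert_commute)
    finally show ?thesis .
  qed
  show ?thesis
  proof (cases "a < b")
    case True
    with assms show ?thesis by (intro ordered) auto
  next
    case False
    with assms show ?thesis by (intro ordered[symmetric]) auto
  qed
qed

lemma gauss_proc_rev_swap:
  assumes "distinct (a # b # rs)" "\<forall>x\<in>set (a # b # rs). 0 < x"
  shows "gauss_proc_rev D fx (a # b # rs) = gauss_proc_rev D fx (b # a # rs)"
proof -
  have kernel: "step_kernel D fx (set rs) r \<in> gauss_proc_rev D fx rs \<rightarrow>\<^sub>M subprob_algebra (Pi_borel (insert r (set rs)))"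
    for r
    by (subst measurable_cong_sets[OF sets_gauss_proc_rev refl])
       (simp add: measurable_prob_algebraD[OF measurable_step_kernel])
  have kernel': "step_kernel D fx (insert r (set rs)) r' \<in> Pi_borel (insert r (set rs))
      \<rightarrow>\<^sub>M subprob_algebra (Pi_borel (insert r' (insert r (set rs))))" for r r'
    by (simp add: measurable_prob_algebraD[OF measurable_step_kernel])
  have "gauss_proc_rev D fx (a # b # rs)
      = bind (gauss_proc_rev D fx rs) (\<lambda>Y. bind (step_kernel D fx (set rs) b Y) (step_kernel D fx (insert b (set rs)) a))"
    by (simp add: gauss_proc_rev_Cons bind_assoc[OF kernel kernel'])
  also have "\<dots> = bind (gauss_proc_rev D fx rs) (\<lambda>Y. bind (step_kernel D fx (set rs) a Y) (step_kernel D fx (insert a (set rs)) b))"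
    using assms by (intro bind_cong refl step_kernels_commute) (auto simp: space_gauss_proc_rev)
  also have "\<dots> = gauss_proc_rev D fx (b # a # rs)"
    by (simp add: gauss_proc_rev_Cons bind_assoc[OF kernel kernel'])
  finally show ?thesis .
qed

lemma gauss_proc_rev_move:
  "distinct (x # ys @ zs) \<Longrightarrow> \<forall>r\<in>set (x # ys @ zs). 0 < r \<Longrightarrow>
     gauss_proc_rev D fx (x # ys @ zs) = gauss_proc_rev D fx (ys @ x # zs)"
proof (induction ys)
  case (Cons y ys)
  then have "gauss_proc_rev D fx (x # (y # ys) @ zs) = gauss_proc_rev D fx (y # x # ys @ zs)"
    by (simp add: gauss_proc_rev_swap)
  also have "\<dots> = gauss_proc_rev D fx (y # ys @ x # zs)"
    using Cons by (simp add: gauss_proc_rev_Cons)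
  finally show ?case
    by simp
qed simp

lemma gauss_proc_rev_perm:
  "distinct xs \<Longrightarrow> distinct ys \<Longrightarrow> set xs = set ys \<Longrightarrow> \<forall>r\<in>set xs. 0 < r \<Longrightarrow>
     gauss_proc_rev D fx xs = gauss_proc_rev D fx ys"
proof (induction xs arbitrary: ys)
  case (Cons x xs)
  then obtain ys1 ys2 where ys: "ys = ys1 @ x # ys2"
    by (metis list.set_intros(1) split_list)
  with Cons.prems have "set xs = set (ys1 @ ys2)"
    by auto
  with Cons ys have "gauss_proc_rev D fx xs = gauss_proc_rev D fx (ys1 @ ys2)"
    by (intro Cons.IH) auto
  with \<open>set xs = set (ys1 @ ys2)\<close>
  have "gauss_proc_rev D fx (x # xs) = gauss_proc_rev D fx (x # ys1 @ ys2)"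
    by (simp add: gauss_proc_rev_Cons)
  also have "\<dots> = gauss_proc_rev D fx ys"
    unfolding ys using Cons.prems ys by (intro gauss_proc_rev_move) auto
  finally show ?case .
qed simp

section \<open>Marginals and the release kernel\<close>

lemma marginal_step_kernel:
  assumes "Y \<in> space (Pi_borel P)" "\<rho> \<in> P" "\<rho> \<noteq> r"
  shows "distr (step_kernel D fx P r Y) borel (\<lambda>Y. Y \<rho>) = return borel (Y \<rho>)"
proof -
  interpret prob_space "step_law D fx P Y r"
    by (simp add: step_law_eq_gauss prob_space_gauss)
  have "distr (step_kernel D fx P r Y) borel (\<lambda>Y. Y \<rho>) = distr (step_law D fx P Y r) borel (\<lambda>_. Y \<rho>)"
    using assms measurable_fun_upd_const[OF assms(1)]
    by (simp add: step_kernel_def distr_distr comp_def step_law_eq_gauss)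
  also have "\<dots> = return borel (Y \<rho>)"
    by (rule distr_const) simp
  finally show ?thesis .
qed

lemma marginal_gauss_proc_rev_append:
  assumes "\<rho> \<in> set rs" "\<rho> \<notin> set zs"
  shows "distr (gauss_proc_rev D fx (zs @ rs)) borel (\<lambda>Y. Y \<rho>) = distr (gauss_proc_rev D fx rs) borel (\<lambda>Y. Y \<rho>)"
  using assms(2)
proof (induction zs)
  case (Cons z zs)
  let ?M = "gauss_proc_rev D fx (zs @ rs)"
  have kernel: "step_kernel D fx (set (zs @ rs)) z \<in> ?M \<rightarrow>\<^sub>M subprob_algebra (Pi_borel (insert z (set (zs @ rs))))"
    by (subst measurable_cong_sets[OF sets_gauss_proc_rev refl])
       (simp add: measurable_prob_algebraD[OF measurable_step_kernel])
  have not_empty: "space ?M \<noteq> {}"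
    using prob_space_gauss_proc_rev by (rule prob_space.not_empty)
  have "distr (gauss_proc_rev D fx ((z # zs) @ rs)) borel (\<lambda>Y. Y \<rho>)
      = bind ?M (\<lambda>Y. distr (step_kernel D fx (set (zs @ rs)) z Y) borel (\<lambda>Y. Y \<rho>))"
    unfolding append_Cons gauss_proc_rev_Cons
    by (rule distr_bind[OF kernel not_empty]) (use assms(1) in simp)
  also have "\<dots> = bind ?M (\<lambda>Y. return borel (Y \<rho>))"
    using assms(1) Cons.prems
    by (intro bind_cong refl marginal_step_kernel) (auto simp: space_gauss_proc_rev)
  also have "\<dots> = distr ?M borel (\<lambda>Y. Y \<rho>)"
    using assms(1) not_empty by (simp add: bind_return_distr' cong: measurable_cong_sets)
  finally show ?case
    using Cons by simp
qed simp

lemma measurable_single_upd: "(\<lambda>y. (\<lambda>_. undefined)(r := y)) \<in> borel \<rightarrow>\<^sub>M Pi_borel {r}"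
  using measurable_fun_upd_const[of "\<lambda>_. undefined" "{}" "\<lambda>_. borel" r] by (simp add: space_PiM)

lemma measurable_return_single_upd:
  "(\<lambda>y. return (Pi_borel {r}) ((\<lambda>_. undefined)(r := y))) \<in> borel \<rightarrow>\<^sub>M prob_algebra (Pi_borel {r})"
  by (rule measurable_compose[OF measurable_single_upd measurable_return_prob_space])

lemma gauss_proc_rev_single:
  "gauss_proc_rev D fx [r] = distr (gauss fx (D\<^sup>2 / (2 * r))) (Pi_borel {r}) (\<lambda>y. (\<lambda>_. undefined)(r := y))"
proof -
  have law: "step_law D fx {} Y r = gauss fx (D\<^sup>2 / (2 * r))" for Y
    by (simp add: step_law_def) (simp add: mult.commute)
  have "gauss_proc_rev D fx [r] = bind (return (Pi_borel {}) (\<lambda>_. undefined)) (step_kernel D fx {} r)"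
    using gauss_proc_rev_Cons[of D fx r "[]"] by simp
  also have "\<dots> = step_kernel D fx {} r (\<lambda>_. undefined)"
    by (rule bind_return[OF measurable_prob_algebraD[OF measurable_step_kernel]]) (simp_all add: space_PiM)
  finally show ?thesis
    by (simp add: step_kernel_def law)
qed

lemma marginal_gauss_proc_rev:
  assumes "distinct rs" "\<forall>r\<in>set rs. 0 < r" "\<rho> \<in> set rs"
  shows "distr (gauss_proc_rev D fx rs) borel (\<lambda>Y. Y \<rho>) = gauss fx (D\<^sup>2 / (2 * \<rho>))"
proof -
  let ?zs = "filter (\<lambda>r. r \<noteq> \<rho>) rs"
  have "gauss_proc_rev D fx rs = gauss_proc_rev D fx (?zs @ [\<rho>])"
    using assms by (intro gauss_proc_rev_perm) auto
  then have "distr (gauss_proc_rev D fx rs) borel (\<lambda>Y. Y \<rho>) = distr (gauss_proc_rev D fx [\<rho>]) borel (\<lambda>Y. Y \<rho>)"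
    by (simp add: marginal_gauss_proc_rev_append)
  also have "\<dots> = gauss fx (D\<^sup>2 / (2 * \<rho>))"
    using measurable_single_upd[of \<rho>] by (simp add: gauss_proc_rev_single distr_distr comp_def distr_id2)
  finally show ?thesis .
qed

primrec gauss_proc_from ::
  "real \<Rightarrow> real \<Rightarrow> (real \<Rightarrow> real) measure \<Rightarrow> real set \<Rightarrow> real list \<Rightarrow> (real \<Rightarrow> real) measure" where
  "gauss_proc_from D fx M P [] = M"
| "gauss_proc_from D fx M P (r # rs) = bind (gauss_proc_from D fx M P rs) (step_kernel D fx (P \<union> set rs) r)"

lemma gauss_proc_rev_append_single:
  "gauss_proc_rev D fx (rs @ [m]) = gauss_proc_from D fx (gauss_proc_rev D fx [m]) {m} rs"
  by (induction rs) (simp_all add: gauss_proc_rev_Cons)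

lemma step_kernel_indep_fx: "\<exists>p\<in>P. r < p \<Longrightarrow> step_kernel D fx P r = step_kernel D 0 P r"
  by (rule ext) (simp add: step_kernel_def step_law_eq_gauss step_mean_def upper_nb_def)

lemma gauss_proc_from_indep_fx:
  "\<forall>r\<in>set rs. r < m \<Longrightarrow> m \<in> P \<Longrightarrow> gauss_proc_from D fx M P rs = gauss_proc_from D 0 M P rs"
proof (induction rs)
  case (Cons r rs)
  then have "\<exists>p\<in>P \<union> set rs. r < p"
    by auto
  with Cons show ?case
    by (simp add: step_kernel_indep_fx[of "P \<union> set rs" r D fx])
qed simp

lemma measurable_gauss_proc_from:
  assumes "F \<in> N \<rightarrow>\<^sub>M prob_algebra (Pi_borel P)" "finite P"
  shows "(\<lambda>y. gauss_proc_from D fx (F y) P rs) \<in> N \<rightarrow>\<^sub>M prob_algebra (Pi_borel (P \<union> set rs))"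
proof (induction rs)
  case (Cons r rs)
  then show ?case
    using assms(2) by (simp add: measurable_bind_prob_space[OF Cons measurable_step_kernel])
qed (simp add: assms(1))

lemma gauss_proc_from_bind:
  assumes N: "sets N = sets borel" "space N \<noteq> {}"
    and F: "F \<in> borel \<rightarrow>\<^sub>M prob_algebra (Pi_borel P)" and fin: "finite P"
  shows "gauss_proc_from D fx (bind N F) P rs = bind N (\<lambda>y. gauss_proc_from D fx (F y) P rs)"
proof (induction rs)
  case (Cons r rs)
  have "(\<lambda>y. gauss_proc_from D fx (F y) P rs) \<in> N \<rightarrow>\<^sub>M subprob_algebra (Pi_borel (P \<union> set rs))"
    using measurable_prob_algebraD[OF measurable_gauss_proc_from[OF F fin]]
    by (simp cong: measurable_cong_sets add: N(1))
  moreover have "step_kernel D fx (P \<union> set rs) r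
      \<in> Pi_borel (P \<union> set rs) \<rightarrow>\<^sub>M subprob_algebra (Pi_borel (insert r (P \<union> set rs)))"
    using fin by (simp add: measurable_prob_algebraD[OF measurable_step_kernel])
  ultimately show ?case
    using Cons by (simp only: gauss_proc_from.simps bind_assoc)
qed simp

text \<open>After the output at \<open>Max S\<close> the other parameters are processed in decreasing order
  (\<open>gauss_proc_from\<close> consumes its list from the right).  Each of them then has an upper
  neighbour, so \<open>f x\<close> is never consulted and 0 can stand in for it.\<close>

definition release_kernel :: "real \<Rightarrow> real set \<Rightarrow> real \<Rightarrow> (real \<Rightarrow> real) measure" where
  "release_kernel D S y = (if finite S \<and> S \<noteq> {}
     then gauss_proc_from D 0 (return (Pi_borel {Max S}) ((\<lambda>_. undefined)(Max S := y))) {Max S}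
            (sorted_list_of_set (S - {Max S}))
     else return (Pi_borel S) (\<lambda>_. undefined))"

lemma measurable_release_kernel: "release_kernel D S \<in> borel \<rightarrow>\<^sub>M prob_algebra (Pi_borel S)"
proof (cases "finite S \<and> S \<noteq> {}")
  case True
  let ?m = "Max S"
  have "?m \<in> S"
    using True by (intro Max_in) auto
  with True have "{?m} \<union> set (sorted_list_of_set (S - {?m})) = S"
    by (simp add: insert_absorb)
  with True measurable_gauss_proc_from[OF measurable_return_single_upd, of ?m D 0 "sorted_list_of_set (S - {?m})"]
  show ?thesis
    by (simp add: release_kernel_def[abs_def])
next
  case False
  then have "release_kernel D S = (\<lambda>_. return (Pi_borel S) (\<lambda>_. undefined))"
    by (auto simp: release_kernel_def)
  moreover have "(\<lambda>_. undefined) \<in> space (Pi_borel S)"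
    by (simp add: space_PiM PiE_def extensional_def)
  ultimately show ?thesis
    by (simp add: space_prob_algebra prob_space_return)
qed

lemma gauss_proc_rev_eq_bind_release_kernel:
  assumes "distinct rs" "rs \<noteq> []" "\<forall>r\<in>set rs. 0 < r"
  shows "gauss_proc_rev D fx rs
       = bind (distr (gauss_proc_rev D fx rs) borel (\<lambda>Y. Y (Max (set rs)))) (release_kernel D (set rs))"
proof -
  let ?m = "Max (set rs)"
  let ?ws = "sorted_list_of_set (set rs - {?m})"
  let ?N = "gauss fx (D\<^sup>2 / (2 * ?m))"
  let ?point = "\<lambda>y. return (Pi_borel {?m}) ((\<lambda>_. undefined)(?m := y))"
  have "?m \<in> set rs"
    using assms by simp
  have marginal: "distr (gauss_proc_rev D fx rs) borel (\<lambda>Y. Y ?m) = ?N"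
    using assms \<open>?m \<in> set rs\<close> by (intro marginal_gauss_proc_rev) auto
  have single: "gauss_proc_rev D fx [?m] = bind ?N ?point"
    unfolding gauss_proc_rev_single
    using measurable_single_upd[of ?m]
    by (intro bind_return_distr'[symmetric] space_gauss_not_empty) (simp cong: measurable_cong_sets)
  have "gauss_proc_rev D fx rs = gauss_proc_rev D fx (?ws @ [?m])"
    using assms \<open>?m \<in> set rs\<close> by (intro gauss_proc_rev_perm) auto
  also have "\<dots> = gauss_proc_from D fx (bind ?N ?point) {?m} ?ws"
    by (simp only: gauss_proc_rev_append_single single)
  also have "\<dots> = bind ?N (\<lambda>y. gauss_proc_from D fx (?point y) {?m} ?ws)"
    by (rule gauss_proc_from_bind) (simp_all add: measurable_return_single_upd space_gauss_not_empty)
  also have "\<dots> = bind ?N (\<lambda>y. gauss_proc_from D 0 (?point y) {?m} ?ws)"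
    using assms by (intro bind_cong refl gauss_proc_from_indep_fx[where m = ?m])
      (auto simp: order.not_eq_order_implies_strict)
  also have "\<dots> = bind ?N (release_kernel D (set rs))"
    using assms by (intro bind_cong refl) (simp add: release_kernel_def)
  finally show ?thesis
    unfolding marginal .
qed

theorem corollary3p5:
  fixes nbr :: "'x \<Rightarrow> 'x \<Rightarrow> bool" and f :: "'x \<Rightarrow> real" and D :: real
  assumes "has_l2_sensitivity nbr f D"
  shows "lossless_multiple_release (gauss_proc D f) (gauss_mech D f)"
  unfolding lossless_multiple_release_def gauss_proc_def gauss_mech_def
proof (intro conjI allI impI exI[of _ "release_kernel D"])
  fix x :: 'x and rs :: "real list" and \<rho> :: real
  assume "distinct rs \<and> (\<forall>r\<in>set rs. 0 < r) \<and> \<rho> \<in> set rs"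
  then show "distr (gauss_proc_rev D (f x) (rev rs)) borel (\<lambda>Y. Y \<rho>) = gauss (f x) (D\<^sup>2 / (2 * \<rho>))"
    by (intro marginal_gauss_proc_rev) auto
next
  fix x :: 'x and rs :: "real list"
  assume "distinct rs \<and> rs \<noteq> [] \<and> (\<forall>r\<in>set rs. 0 < r)"
  then show "gauss_proc_rev D (f x) (rev rs)
      = bind (distr (gauss_proc_rev D (f x) (rev rs)) borel (\<lambda>Y. Y (Max (set rs)))) (release_kernel D (set rs))"
    using gauss_proc_rev_eq_bind_release_kernel[of "rev rs" D "f x"] by simp
qed (rule measurable_release_kernel)

end
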